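(* Let $q$ be a prime and $m$ a positive integer. Let $C$ be a nonzero cyclic code of length $m$ over $\mathbb{F}_q$ such that no codeword of $C$ has Hamming weight $m$ (i.e. every codeword has at least one zero entry). Then the permutation group $G(C)$ of $\mathbb{Z}_q\times\mathbb{Z}_m$ is transitive and $\rho(G(C))=q$.
   Context: A linear code of length $m$ over $\mathbb{F}_q$ is a subspace of $\mathbb{F}_q^m$; it is cyclic if $(c_0,\dots,c_{m-1})\in C$ implies $(c_{m-1},c_0,\dots,c_{m-2})\in C$. The Hamming weight of a codeword is its number of nonzero entries. For a cyclic code $C$ of length $m$ over $\mathbb{F}_q$ ($q$ prime, entries identified with $\mathbb{Z}_q$), let $V=\mathbb{Z}_q\times\mathbb{Z}_m$, let $\alpha\in\mathrm{Sym}(V)$ be $\alpha(i,j)=(i,j+1)$, and for $\mathbf{c}=(c_0,\dots,c_{m-1})\in C$ let $\beta_{\mathbf{c}}(i,j)=(i+c_j,j)$. Then $G(C)=\langle \{\alpha\}\cup\{\beta_{\mathbf{c}}:\mathbf{c}\in C\}\rangle\le\mathrm{Sym}(V)$. For a permutation group $G$ on a set $V$, two elements $g,h\in G$ are intersecting if $g(v)=h(v)$ for some $v\in V$; a subset $\mathcal{F}\subseteq G$ is intersecting if every pair of its elements is intersecting. The intersection density of $G$ is $\rho(G)=\max\{|\mathcal{F}|:\mathcal{F}\subseteq G \text{ intersecting}\}/\max_{v\in V}|G_v|$, where $G_v$ is the stabilizer of $v$. *)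

theory Defs
  imports Complex_Main "HOL-Algebra.Bij" "HOL-Algebra.Generated_Groups" "HOL-Computational_Algebra.Primes"
begin

text \<open>Codewords of length m over F_q (q prime) are lists of length m with entries in {0..<q}
  (entries identified with Z_q).\<close>

definition code_vectors :: "nat \<Rightarrow> nat \<Rightarrow> nat list set" where
  "code_vectors q m = {c. length c = m \<and> set c \<subseteq> {..<q}}"

definition linear_code :: "nat \<Rightarrow> nat \<Rightarrow> nat list set \<Rightarrow> bool" where
  "linear_code q m C \<longleftrightarrow> C \<subseteq> code_vectors q m \<and> replicate m 0 \<in> C
     \<and> (\<forall>c\<in>C. \<forall>d\<in>C. map2 (\<lambda>x y. (x + y) mod q) c d \<in> C)
     \<and> (\<forall>a<q. \<forall>c\<in>C. map (\<lambda>x. (a * x) mod q) c \<in> C)"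

definition cyclic_code :: "nat \<Rightarrow> nat \<Rightarrow> nat list set \<Rightarrow> bool" where
  "cyclic_code q m C \<longleftrightarrow> linear_code q m C \<and> (\<forall>c\<in>C. last c # butlast c \<in> C)"

definition hamming_weight :: "nat list \<Rightarrow> nat" where
  "hamming_weight c = card {j. j < length c \<and> c ! j \<noteq> 0}"

definition Vset :: "nat \<Rightarrow> nat \<Rightarrow> (nat \<times> nat) set" where
  "Vset q m = {..<q} \<times> {..<m}"

definition alpha_perm :: "nat \<Rightarrow> nat \<Rightarrow> (nat \<times> nat) \<Rightarrow> (nat \<times> nat)" where
  "alpha_perm q m = restrict (\<lambda>(i, j). (i, (j + 1) mod m)) (Vset q m)"

definition beta_perm :: "nat \<Rightarrow> nat \<Rightarrow> nat list \<Rightarrow> (nat \<times> nat) \<Rightarrow> (nat \<times> nat)" where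
  "beta_perm q m c = restrict (\<lambda>(i, j). ((i + c ! j) mod q, j)) (Vset q m)"

definition GC :: "nat \<Rightarrow> nat \<Rightarrow> nat list set \<Rightarrow> ((nat \<times> nat) \<Rightarrow> (nat \<times> nat)) set" where
  "GC q m C = generate (BijGroup (Vset q m)) ({alpha_perm q m} \<union> beta_perm q m ` C)"

definition transitive_on :: "'a set \<Rightarrow> ('a \<Rightarrow> 'a) set \<Rightarrow> bool" where
  "transitive_on V G \<longleftrightarrow> (\<forall>u\<in>V. \<forall>v\<in>V. \<exists>g\<in>G. g u = v)"

definition intersecting :: "'a set \<Rightarrow> ('a \<Rightarrow> 'a) set \<Rightarrow> bool" where
  "intersecting V F \<longleftrightarrow> (\<forall>g\<in>F. \<forall>h\<in>F. \<exists>v\<in>V. g v = h v)"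

definition stabilizer :: "('a \<Rightarrow> 'a) set \<Rightarrow> 'a \<Rightarrow> ('a \<Rightarrow> 'a) set" where
  "stabilizer G v = {g\<in>G. g v = v}"

definition intersection_density :: "'a set \<Rightarrow> ('a \<Rightarrow> 'a) set \<Rightarrow> real" where
  "intersection_density V G =
     real (Max {card F | F. F \<subseteq> G \<and> intersecting V F}) / real (Max {card (stabilizer G v) | v. v \<in> V})"

end

theory Submission
  imports Defs "HOL-Number_Theory.Cong"
begin

(* Every element of G(C) has the form (i, j) \<mapsto> (i + c_j, j + k) with c \<in> C and k \<in> Z_m,
   and such an element determines c and k.  Hence |G(C)| = |C| m, and the stabiliser of (i, j)
   consists of the translations by codewords vanishing at j, which by linearity, cyclicity and
   primality of q are exactly |C| / q many.  Transitivity follows since every coordinate of a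
   nonzero cyclic code takes every value.  Two elements with the same codeword c but different
   shifts never agree at a point, so an intersecting family has at most |C| elements.  Conversely
   the translations by all codewords form an intersecting family: two of them agree at every
   point (i, j) with j a zero of the difference of their codewords, which exists because no
   codeword has full weight.  The density is therefore |C| / (|C| / q) = q. *)

lemma mod_add_right_cancel_less:
  fixes x y z q :: nat
  assumes "x < q" "y < q" "(x + z) mod q = (y + z) mod q"
  shows "x = y"
  using assms by (metis cong_def cong_add_rcancel_nat cong_less_modulus_unique_nat)

lemma mod_add_neg_eq_0_imp_eq:
  fixes x y q :: nat
  assumes "x < q" "y < q" "(x + ((q - 1) * y) mod q) mod q = 0"
  shows "x = y"
proof -
  have "(x + (q - 1) * y + y) mod q = (0 + y) mod q"
    using assms(3) by (metis mod_add_left_eq mod_add_right_eq)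
  moreover have "x + (q - 1) * y + y = x + q * y"
    using assms by (cases q) auto
  ultimately show ?thesis
    using assms by (metis add_0 mod_add_right_cancel_less mod_mult_self2)
qed

abbreviation vec_add :: "nat \<Rightarrow> nat list \<Rightarrow> nat list \<Rightarrow> nat list" where
  "vec_add q c d \<equiv> map2 (\<lambda>x y. (x + y) mod q) c d"

abbreviation vec_smult :: "nat \<Rightarrow> nat \<Rightarrow> nat list \<Rightarrow> nat list" where
  "vec_smult q a c \<equiv> map (\<lambda>x. (a * x) mod q) c"

lemma nth_vec_add: "j < length c \<Longrightarrow> j < length d \<Longrightarrow> vec_add q c d ! j = (c ! j + d ! j) mod q"
  by simp

lemma nth_vec_smult: "j < length c \<Longrightarrow> vec_smult q a c ! j = (a * c ! j) mod q"
  by simp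

lemma rotate_right_eq_rotate: "c \<noteq> [] \<Longrightarrow> last c # butlast c = rotate (length c - 1) c"
proof (rule nth_equalityI)
  fix t assume "c \<noteq> []" "t < length (last c # butlast c)"
  then show "(last c # butlast c) ! t = rotate (length c - 1) c ! t"
    by (cases t) (auto simp: nth_rotate last_conv_nth nth_butlast)
qed simp

lemma rotate_closed:
  fixes A :: "'a list set"
  assumes "m > 0" "\<And>c. c \<in> A \<Longrightarrow> length c = m"
    and rot: "\<And>c. c \<in> A \<Longrightarrow> rotate (m - 1) c \<in> A" and "c \<in> A"
  shows "rotate r c \<in> A"
proof -
  have iter: "rotate (n * (m - 1)) c \<in> A" for n
  proof (induction n)
    case (Suc n)
    then show ?case
      using rot[OF Suc] by (simp add: rotate_rotate add.commute)
  qed (simp add: \<open>c \<in> A\<close>)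
  \<comment> \<open>\<open>(m - 1)\<^sup>2 \<equiv> 1 (mod m)\<close>, so \<open>r (m - 1)\<close> right rotations by \<open>m - 1\<close> rotate by \<open>r\<close>\<close>
  have "r * (m - 1) * (m - 1) + r * m = r + r * (m - 1) * m"
    using \<open>m > 0\<close> by (cases m) (simp_all add: algebra_simps)
  then have "(r * (m - 1) * (m - 1) + r * m) mod m = (r + r * (m - 1) * m) mod m"
    by (simp only:)
  then have "(r * (m - 1) * (m - 1)) mod m = r mod m"
    by (simp only: mod_mult_self1)
  then have "rotate (r * (m - 1) * (m - 1)) c = rotate r c"
    using assms(2)[OF \<open>c \<in> A\<close>] by (metis rotate_conv_mod)
  then show ?thesis
    using iter[of "r * (m - 1)"] by simp
qed

lemma hamming_weight_zero_entry:
  assumes "hamming_weight c \<noteq> length c"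
  obtains j where "j < length c" "c ! j = 0"
proof -
  have "\<exists>j<length c. c ! j = 0"
  proof (rule ccontr)
    assume "\<not> (\<exists>j<length c. c ! j = 0)"
    then have "{j. j < length c \<and> c ! j \<noteq> 0} = {..<length c}"
      by auto
    then have "hamming_weight c = length c"
      by (simp add: hamming_weight_def)
    with assms show False ..
  qed
  then show ?thesis
    using that by blast
qed

(* code_perm q m (nth c) k is alpha^k composed after beta_c. *)
definition code_perm :: "nat \<Rightarrow> nat \<Rightarrow> (nat \<Rightarrow> nat) \<Rightarrow> nat \<Rightarrow> nat \<times> nat \<Rightarrow> nat \<times> nat" where
  "code_perm q m g k = restrict (\<lambda>(i, j). ((i + g j) mod q, (j + k) mod m)) (Vset q m)"

lemma mem_Vset [simp]: "(i, j) \<in> Vset q m \<longleftrightarrow> i < q \<and> j < m"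
  by (simp add: Vset_def)

lemma code_perm_apply [simp]:
  "i < q \<Longrightarrow> j < m \<Longrightarrow> code_perm q m g k (i, j) = ((i + g j) mod q, (j + k) mod m)"
  by (simp add: code_perm_def)

lemma code_perm_cong:
  assumes "\<And>j. j < m \<Longrightarrow> g j mod q = h j mod q" and "k mod m = l mod m"
  shows "code_perm q m g k = code_perm q m h l"
  unfolding code_perm_def
proof (rule restrict_ext, clarsimp)
  fix i j assume "i < q" "j < m"
  then show "(i + g j) mod q = (i + h j) mod q \<and> (j + k) mod m = (j + l) mod m"
    using assms by (metis mod_add_right_eq)
qed

lemma code_perm_Bij:
  assumes "q > 0" "m > 0"
  shows "code_perm q m g k \<in> Bij (Vset q m)"
proof -
  let ?f = "code_perm q m g k" and ?V = "Vset q m"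
  have maps: "?f ` ?V \<subseteq> ?V"
    using assms by (auto simp: Vset_def)
  have "inj_on ?f ?V"
  proof (rule inj_onI, clarsimp)
    fix i j i' j'
    assume "i < q" "j < m" "i' < q" "j' < m"
      and "(i + g j) mod q = (i' + g j') mod q" "(j + k) mod m = (j' + k) mod m"
    then show "i = i' \<and> j = j'"
      by (metis mod_add_right_cancel_less)
  qed
  with maps have "bij_betw ?f ?V ?V"
    by (simp add: bij_betw_def endo_inj_surj Vset_def)
  then show ?thesis
    by (simp add: Bij_def code_perm_def)
qed

lemma code_perm_mult:
  assumes "q > 0" "m > 0"
  shows "code_perm q m g k \<otimes>\<^bsub>BijGroup (Vset q m)\<^esub> code_perm q m h l
    = code_perm q m (\<lambda>j. h j + g ((j + l) mod m)) (k + l)"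
proof -
  have "compose (Vset q m) (code_perm q m g k) (code_perm q m h l)
      = code_perm q m (\<lambda>j. h j + g ((j + l) mod m)) (k + l)"
    unfolding compose_def code_perm_def
    by (rule restrict_ext) (auto simp: Vset_def mod_simps add_ac)
  then show ?thesis
    using code_perm_Bij[OF assms] by (simp add: BijGroup_def)
qed

lemma code_perm_one: "code_perm q m (\<lambda>_. 0) 0 = \<one>\<^bsub>BijGroup (Vset q m)\<^esub>"
  by (auto simp: BijGroup_def code_perm_def Vset_def intro!: restrict_ext)

lemma alpha_perm_eq: "alpha_perm q m = code_perm q m (\<lambda>_. 0) 1"
  unfolding alpha_perm_def code_perm_def by (rule restrict_ext) auto

lemma beta_perm_eq: "beta_perm q m c = code_perm q m (nth c) 0"
  unfolding beta_perm_def code_perm_def by (rule restrict_ext) auto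

lemma code_perm_shift_eq:
  assumes "i < q" "j < m" "k < m" "l < m"
    and "code_perm q m g k (i, j) = code_perm q m h l (i, j)"
  shows "k = l"
proof -
  have "(k + j) mod m = (l + j) mod m"
    using assms by (simp add: add.commute)
  then show ?thesis
    using assms(3,4) by (rule mod_add_right_cancel_less[rotated 2])
qed

locale prime_cyclic_code =
  fixes q m :: nat and C :: "nat list set"
  assumes prime_q: "prime q" and m_pos: "m > 0" and cyclic: "cyclic_code q m C"
begin

abbreviation zero_word :: "nat list" where
  "zero_word \<equiv> replicate m 0"

lemma q_pos: "q > 0"
  using prime_q prime_gt_0_nat by blast

lemma code_linear: "linear_code q m C"
  using cyclic by (simp add: cyclic_code_def)

lemma code_length: "c \<in> C \<Longrightarrow> length c = m"
  using code_linear by (auto simp: linear_code_def code_vectors_def)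

lemma code_nth_less:
  assumes "c \<in> C" "j < m"
  shows "c ! j < q"
proof -
  have "set c \<subseteq> {..<q}"
    using code_linear assms(1) by (auto simp: linear_code_def code_vectors_def)
  moreover have "c ! j \<in> set c"
    using code_length assms by simp
  ultimately show ?thesis
    by auto
qed

lemma zero_word_in_code: "zero_word \<in> C"
  using code_linear by (simp add: linear_code_def)

lemma vec_add_in_code: "c \<in> C \<Longrightarrow> d \<in> C \<Longrightarrow> vec_add q c d \<in> C"
  using code_linear by (simp add: linear_code_def)

lemma vec_smult_in_code: "a < q \<Longrightarrow> c \<in> C \<Longrightarrow> vec_smult q a c \<in> C"
  using code_linear by (simp add: linear_code_def)

lemma rotate_in_code: "c \<in> C \<Longrightarrow> rotate r c \<in> C"
proof (rule rotate_closed[OF m_pos code_length])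
  fix d assume "d \<in> C"
  then have "d \<noteq> []" "length d = m"
    using code_length m_pos by auto
  moreover have "last d # butlast d \<in> C"
    using cyclic \<open>d \<in> C\<close> by (simp add: cyclic_code_def)
  ultimately show "rotate (m - 1) d \<in> C"
    by (simp add: rotate_right_eq_rotate)
qed

lemma finite_code: "finite C"
proof (rule finite_subset)
  show "C \<subseteq> {c. set c \<subseteq> {..<q} \<and> length c = m}"
    using code_linear by (auto simp: linear_code_def code_vectors_def)
qed (rule finite_lists_length_eq, simp)

lemma code_eqI: "c \<in> C \<Longrightarrow> d \<in> C \<Longrightarrow> (\<And>j. j < m \<Longrightarrow> c ! j = d ! j) \<Longrightarrow> c = d"
  by (metis code_length nth_equalityI)

lemma code_nonzero_entry:
  assumes "C \<noteq> {zero_word}"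
  obtains c p where "c \<in> C" "p < m" "c ! p \<noteq> 0"
proof -
  obtain c where "c \<in> C" "c \<noteq> zero_word"
    using assms zero_word_in_code by blast
  then have "\<exists>p<m. c ! p \<noteq> 0"
    using code_eqI[OF _ zero_word_in_code] by (metis nth_replicate)
  with \<open>c \<in> C\<close> that show ?thesis
    by blast
qed

lemma code_value_exists:
  assumes "C \<noteq> {zero_word}" "j < m" "a < q"
  obtains c where "c \<in> C" "c ! j = a"
proof -
  obtain c0 p where c0: "c0 \<in> C" "p < m" "c0 ! p \<noteq> 0"
    using code_nonzero_entry[OF assms(1)] .
  define c1 where "c1 = rotate (p + m - j) c0"
  define x where "x = c1 ! j"
  have c1: "c1 \<in> C"
    unfolding c1_def using rotate_in_code[OF c0(1)] .
  have "x = c0 ! p"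
    using assms(2) c0 code_length by (simp add: x_def c1_def nth_rotate)
  then have "0 < x" "x < q"
    using c0 code_nth_less by auto
  then have "coprime x q"
    using prime_q by (metis coprime_commute dvd_imp_le not_le prime_imp_coprime)
  then obtain u where u: "[x * u = 1] (mod q)"
    using cong_solve_coprime_nat by auto
  define c2 where "c2 = vec_smult q ((a * u) mod q) c1"
  have "c2 \<in> C"
    unfolding c2_def using vec_smult_in_code[OF _ c1] q_pos by simp
  moreover have "c2 ! j = a"
  proof -
    have "[(a * u) mod q * x = a * u * x] (mod q)"
      by (simp add: cong_def mod_mult_left_eq)
    also have "a * u * x = a * (x * u)"
      by (simp add: ac_simps)
    also have "[\<dots> = a * 1] (mod q)"
      using u by (rule cong_scalar_left)
    finally show ?thesis
      using assms c1 code_length by (simp add: c2_def x_def cong_def)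
  qed
  ultimately show ?thesis
    using that by blast
qed

definition code_fibre :: "nat \<Rightarrow> nat \<Rightarrow> nat list set" where
  "code_fibre j a = {c \<in> C. c ! j = a}"

lemma code_fibre_subset: "code_fibre j a \<subseteq> C"
  by (auto simp: code_fibre_def)

lemma card_code_fibre_le:
  assumes "C \<noteq> {zero_word}" "j < m" "a < q" "b < q"
  shows "card (code_fibre j a) \<le> card (code_fibre j b)"
proof -
  have "(b + q - a) mod q < q"
    using q_pos by simp
  then obtain w where w: "w \<in> C" "w ! j = (b + q - a) mod q"
    using code_value_exists[OF assms(1,2)] by blast
  let ?t = "\<lambda>c. vec_add q c w"
  have inj: "inj_on ?t C"
  proof (rule inj_onI)
    fix c d assume cd: "c \<in> C" "d \<in> C" "?t c = ?t d"
    show "c = d"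
    proof (rule code_eqI[OF cd(1,2)])
      fix i assume "i < m"
      have "?t c ! i = ?t d ! i"
        using cd(3) by simp
      then have "(c ! i + w ! i) mod q = (d ! i + w ! i) mod q"
        using \<open>i < m\<close> cd(1,2) w(1) code_length by simp
      then show "c ! i = d ! i"
        using \<open>i < m\<close> cd code_nth_less mod_add_right_cancel_less by blast
    qed
  qed
  have image: "?t ` code_fibre j a \<subseteq> code_fibre j b"
  proof
    fix e assume "e \<in> ?t ` code_fibre j a"
    then obtain c where c: "c \<in> C" "c ! j = a" "e = ?t c"
      by (auto simp: code_fibre_def)
    have "e ! j = (a + (b + q - a) mod q) mod q"
      using c w assms(2) code_length by simp
    also have "\<dots> = b"
      using assms(3,4) by (simp add: mod_add_right_eq)
    finally show "e \<in> code_fibre j b"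
      using c w vec_add_in_code by (simp add: code_fibre_def)
  qed
  show ?thesis
    using inj_on_subset[OF inj code_fibre_subset] image finite_subset[OF code_fibre_subset finite_code]
    by (rule card_inj_on_le)
qed

lemma card_code_eq:
  assumes "C \<noteq> {zero_word}" "j < m"
  shows "card C = q * card (code_fibre j 0)"
proof -
  have "C = (\<Union>a\<in>{..<q}. code_fibre j a)"
    using code_nth_less[OF _ assms(2)] by (auto simp: code_fibre_def)
  then have "card C = card (\<Union>a\<in>{..<q}. code_fibre j a)"
    by (rule arg_cong)
  also have "\<dots> = (\<Sum>a<q. card (code_fibre j a))"
    using finite_code by (intro card_UN_disjoint) (auto simp: code_fibre_def)
  also have "\<dots> = (\<Sum>a<q. card (code_fibre j 0))"
  proof (rule sum.cong)
    fix a assume "a \<in> {..<q}"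
    then show "card (code_fibre j a) = card (code_fibre j 0)"
      using card_code_fibre_le[OF assms, of a 0] card_code_fibre_le[OF assms, of 0 a] q_pos
      by simp
  qed simp
  finally show ?thesis
    by simp
qed

lemma card_code_fibre_pos: "card (code_fibre 0 0) > 0"
  using zero_word_in_code m_pos finite_subset[OF code_fibre_subset finite_code]
  by (auto simp: card_gt_0_iff code_fibre_def)

abbreviation SymV :: "(nat \<times> nat \<Rightarrow> nat \<times> nat) monoid" where
  "SymV \<equiv> BijGroup (Vset q m)"

definition code_perms :: "(nat \<times> nat \<Rightarrow> nat \<times> nat) set" where
  "code_perms = (\<lambda>(c, k). code_perm q m (nth c) k) ` (C \<times> {..<m})"

lemma mem_code_perms: "x \<in> code_perms \<longleftrightarrow> (\<exists>c\<in>C. \<exists>k<m. x = code_perm q m (nth c) k)"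
  by (auto simp: code_perms_def)

lemma code_perm_in_code_perms:
  assumes "c \<in> C"
  shows "code_perm q m (nth c) k \<in> code_perms"
proof -
  have "code_perm q m (nth c) k = code_perm q m (nth c) (k mod m)"
    by (rule code_perm_cong) simp_all
  then show ?thesis
    using assms m_pos by (force simp: code_perms_def)
qed

lemma code_perm_zero_word: "code_perm q m (\<lambda>_. 0) k \<in> code_perms"
proof -
  have "code_perm q m (\<lambda>_. 0) k = code_perm q m (nth zero_word) k"
    by (rule code_perm_cong) simp_all
  then show ?thesis
    using code_perm_in_code_perms[OF zero_word_in_code] by simp
qed

lemma code_perm_mult_code:
  assumes "c \<in> C" "d \<in> C"
  shows "code_perm q m (nth c) k \<otimes>\<^bsub>SymV\<^esub> code_perm q m (nth d) l
    = code_perm q m (nth (vec_add q d (rotate l c))) (k + l)"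
  unfolding code_perm_mult[OF q_pos m_pos]
  using assms code_length by (intro code_perm_cong) (simp_all add: nth_rotate add.commute)

lemma code_perm_inv_code:
  assumes "c \<in> C" "k < m"
  shows "inv\<^bsub>SymV\<^esub> (code_perm q m (nth c) k)
    = code_perm q m (nth (vec_smult q (q - 1) (rotate (m - k) c))) (m - k)"
proof -
  let ?x = "code_perm q m (nth c) k"
  let ?y = "code_perm q m (nth (vec_smult q (q - 1) (rotate (m - k) c))) (m - k)"
  have "?x \<otimes>\<^bsub>SymV\<^esub> ?y = code_perm q m (\<lambda>_. 0) 0"
    unfolding code_perm_mult[OF q_pos m_pos]
  proof (rule code_perm_cong)
    fix j assume "j < m"
    let ?z = "c ! ((m - k + j) mod m)"
    have "(q - 1) * ?z + ?z = q * ?z"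
      using q_pos by (cases q) auto
    then show "(vec_smult q (q - 1) (rotate (m - k) c) ! j + c ! ((j + (m - k)) mod m)) mod q
        = 0 mod q"
      using assms \<open>j < m\<close> code_length by (simp add: nth_rotate add.commute mod_add_right_eq)
  qed (use assms in simp)
  then have "?x \<otimes>\<^bsub>SymV\<^esub> ?y = \<one>\<^bsub>SymV\<^esub>"
    by (simp add: code_perm_one)
  moreover have "?x \<in> carrier SymV" "?y \<in> carrier SymV"
    using code_perm_Bij q_pos m_pos by (simp_all add: BijGroup_def)
  ultimately show ?thesis
    using group.inv_equality[OF group_BijGroup] group.inv_comm[OF group_BijGroup] by blast
qed

lemma subgroup_code_perms: "subgroup code_perms SymV"
proof
  show "code_perms \<subseteq> carrier SymV"
    using code_perm_Bij[OF q_pos m_pos] by (auto simp: code_perms_def BijGroup_def)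
next
  fix x y assume "x \<in> code_perms" "y \<in> code_perms"
  then show "x \<otimes>\<^bsub>SymV\<^esub> y \<in> code_perms"
    by (auto simp: mem_code_perms[of x] mem_code_perms[of y] code_perm_mult_code
        intro!: code_perm_in_code_perms vec_add_in_code rotate_in_code)
next
  show "\<one>\<^bsub>SymV\<^esub> \<in> code_perms"
    using code_perm_zero_word by (simp add: code_perm_one[symmetric])
next
  fix x assume "x \<in> code_perms"
  then show "inv\<^bsub>SymV\<^esub> x \<in> code_perms"
    using q_pos by (auto simp: mem_code_perms[of x] code_perm_inv_code
        intro!: code_perm_in_code_perms vec_smult_in_code rotate_in_code)
qed

lemma shift_perm_in_GC: "code_perm q m (\<lambda>_. 0) k \<in> GC q m C"
proof (induction k)
  case 0
  then show ?case
    by (simp add: GC_def code_perm_one generate.one)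
next
  case (Suc k)
  have "alpha_perm q m \<in> GC q m C"
    by (simp add: GC_def generate.incl)
  with Suc have "code_perm q m (\<lambda>_. 0) k \<otimes>\<^bsub>SymV\<^esub> alpha_perm q m \<in> GC q m C"
    unfolding GC_def by (rule generate.eng)
  then show ?case
    by (simp add: alpha_perm_eq code_perm_mult[OF q_pos m_pos])
qed

lemma GC_eq_code_perms: "GC q m C = code_perms"
proof
  have "{alpha_perm q m} \<union> beta_perm q m ` C \<subseteq> code_perms"
    by (auto simp: alpha_perm_eq beta_perm_eq code_perm_zero_word code_perm_in_code_perms)
  then show "GC q m C \<subseteq> code_perms"
    unfolding GC_def
    by (rule group.generate_subgroup_incl[OF group_BijGroup _ subgroup_code_perms])
next
  show "code_perms \<subseteq> GC q m C"
  proof (clarsimp simp: code_perms_def)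
    fix c k assume "c \<in> C" "k < m"
    have "beta_perm q m c \<in> GC q m C"
      using \<open>c \<in> C\<close> by (simp add: GC_def generate.incl)
    with shift_perm_in_GC have "code_perm q m (\<lambda>_. 0) k \<otimes>\<^bsub>SymV\<^esub> beta_perm q m c \<in> GC q m C"
      unfolding GC_def by (rule generate.eng)
    then show "code_perm q m (nth c) k \<in> GC q m C"
      by (simp add: beta_perm_eq code_perm_mult[OF q_pos m_pos])
  qed
qed

lemma GC_transitive:
  assumes "C \<noteq> {zero_word}"
  shows "transitive_on (Vset q m) (GC q m C)"
  unfolding transitive_on_def
proof (clarsimp)
  fix i j i' j' assume "i < q" "j < m" "i' < q" "j' < m"
  have "(i' + q - i) mod q < q"
    using q_pos by simp
  then obtain c where c: "c \<in> C" "c ! j = (i' + q - i) mod q"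
    using code_value_exists[OF assms \<open>j < m\<close>] by blast
  have "code_perm q m (nth c) (j' + m - j) (i, j) = (i', j')"
    using c \<open>i < q\<close> \<open>j < m\<close> \<open>i' < q\<close> \<open>j' < m\<close> by (simp add: mod_add_right_eq)
  moreover have "code_perm q m (nth c) (j' + m - j) \<in> GC q m C"
    using c GC_eq_code_perms code_perm_in_code_perms by simp
  ultimately show "\<exists>g\<in>GC q m C. g (i, j) = (i', j')"
    by blast
qed

lemma inj_on_translations: "inj_on (\<lambda>c. code_perm q m (nth c) 0) C"
proof (rule inj_onI)
  fix c d assume cd: "c \<in> C" "d \<in> C" "code_perm q m (nth c) 0 = code_perm q m (nth d) 0"
  show "c = d"
  proof (rule code_eqI[OF cd(1,2)])
    fix j assume "j < m"
    then have "code_perm q m (nth c) 0 (0, j) = code_perm q m (nth d) 0 (0, j)"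
      using cd(3) by simp
    then show "c ! j = d ! j"
      using \<open>j < m\<close> q_pos cd(1,2) code_nth_less by simp
  qed
qed

lemma stabilizer_GC:
  assumes "i < q" "j < m"
  shows "stabilizer (GC q m C) (i, j) = (\<lambda>c. code_perm q m (nth c) 0) ` code_fibre j 0"
proof (intro equalityI subsetI)
  fix g assume "g \<in> stabilizer (GC q m C) (i, j)"
  then obtain c k where g: "g = code_perm q m (nth c) k" "c \<in> C" "k < m" "g (i, j) = (i, j)"
    by (auto simp: stabilizer_def GC_eq_code_perms mem_code_perms)
  have "(i + c ! j) mod q = i" "(j + k) mod m = j"
    using g assms by simp_all
  then have "(c ! j + i) mod q = (0 + i) mod q" "(k + j) mod m = (0 + j) mod m"
    using assms by (simp_all add: add.commute)
  then have "c ! j = 0" "k = 0"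
    using mod_add_right_cancel_less code_nth_less[OF g(2) assms(2)] q_pos \<open>k < m\<close> m_pos
    by blast+
  then show "g \<in> (\<lambda>c. code_perm q m (nth c) 0) ` code_fibre j 0"
    using g by (auto simp: code_fibre_def)
next
  fix g assume "g \<in> (\<lambda>c. code_perm q m (nth c) 0) ` code_fibre j 0"
  then show "g \<in> stabilizer (GC q m C) (i, j)"
    using assms code_perm_in_code_perms
    by (auto simp: code_fibre_def stabilizer_def GC_eq_code_perms)
qed

lemma card_stabilizer_GC:
  "i < q \<Longrightarrow> j < m \<Longrightarrow> card (stabilizer (GC q m C) (i, j)) = card (code_fibre j 0)"
  unfolding stabilizer_GC
  by (rule card_image) (rule inj_on_subset[OF inj_on_translations code_fibre_subset])

lemma intersecting_translations:
  assumes "\<forall>c\<in>C. hamming_weight c \<noteq> m"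
  shows "intersecting (Vset q m) ((\<lambda>c. code_perm q m (nth c) 0) ` C)"
  unfolding intersecting_def
proof (clarify)
  fix c d assume "c \<in> C" "d \<in> C"
  \<comment> \<open>\<open>e = c - d\<close>, negation being the scalar multiple by \<open>q - 1\<close>\<close>
  define e where "e = vec_add q c (vec_smult q (q - 1) d)"
  have "e \<in> C"
    unfolding e_def using \<open>c \<in> C\<close> \<open>d \<in> C\<close> q_pos
    by (intro vec_add_in_code vec_smult_in_code) simp_all
  then have "length e = m" "hamming_weight e \<noteq> length e"
    using assms code_length by auto
  from this(2) obtain j where "j < length e" and e_j: "e ! j = 0"
    by (rule hamming_weight_zero_entry)
  with \<open>length e = m\<close> have "j < m"
    by simp
  have "j < length c" "j < length d"
    using \<open>j < m\<close> \<open>c \<in> C\<close> \<open>d \<in> C\<close> code_length by simp_all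
  then have "(c ! j + ((q - 1) * d ! j) mod q) mod q = e ! j"
    unfolding e_def by (simp only: nth_vec_add nth_vec_smult length_map)
  also have "\<dots> = 0"
    by (rule e_j)
  finally have "c ! j = d ! j"
    using code_nth_less[OF \<open>c \<in> C\<close> \<open>j < m\<close>] code_nth_less[OF \<open>d \<in> C\<close> \<open>j < m\<close>]
    by (rule mod_add_neg_eq_0_imp_eq[rotated 2])
  then have "code_perm q m (nth c) 0 (0, j) = code_perm q m (nth d) 0 (0, j)"
    using \<open>j < m\<close> q_pos by simp
  moreover have "(0, j) \<in> Vset q m"
    using \<open>j < m\<close> q_pos by simp
  ultimately show "\<exists>v\<in>Vset q m. code_perm q m (nth c) 0 v = code_perm q m (nth d) 0 v"
    by blast
qed

lemma card_intersecting_le: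
  assumes "F \<subseteq> GC q m C" "intersecting (Vset q m) F"
  shows "card F \<le> card C"
proof -
  \<comment> \<open>oriented as \<open>\<dots> = g\<close> so that rewriting with it does not loop\<close>
  have "\<forall>g\<in>GC q m C. \<exists>c. c \<in> C \<and> (\<exists>k<m. code_perm q m (nth c) k = g)"
    by (fastforce simp: GC_eq_code_perms code_perms_def)
  from bchoice[OF this] obtain code
    where code: "\<forall>g\<in>GC q m C. code g \<in> C \<and> (\<exists>k<m. code_perm q m (nth (code g)) k = g)"
    by blast
  have "inj_on code F"
  proof (rule inj_onI)
    fix g h assume "g \<in> F" "h \<in> F" and same_code: "code g = code h"
    with assms(1) code obtain k l where "k < m" "l < m"
      and g: "code_perm q m (nth (code g)) k = g" and h: "code_perm q m (nth (code g)) l = h"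
      by (metis subsetD)
    obtain v where "v \<in> Vset q m" "g v = h v"
      using assms(2) \<open>g \<in> F\<close> \<open>h \<in> F\<close> unfolding intersecting_def by blast
    then obtain i j where "i < q" "j < m" "g (i, j) = h (i, j)"
      by (cases v) auto
    then have "code_perm q m (nth (code g)) k (i, j) = code_perm q m (nth (code g)) l (i, j)"
      by (simp only: g h)
    with \<open>i < q\<close> \<open>j < m\<close> \<open>k < m\<close> \<open>l < m\<close> have "k = l"
      by (rule code_perm_shift_eq)
    then show "g = h"
      using g h by metis
  qed
  moreover have "code ` F \<subseteq> C"
    using code assms(1) by auto
  ultimately show ?thesis
    using finite_code by (rule card_inj_on_le)
qed

lemma Max_card_intersecting:
  assumes "\<forall>c\<in>C. hamming_weight c \<noteq> m"
  shows "Max {card F | F. F \<subseteq> GC q m C \<and> intersecting (Vset q m) F} = card C"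
proof (rule Max_eqI)
  have "finite (GC q m C)"
    using finite_code by (simp add: GC_eq_code_perms code_perms_def)
  then show "finite {card F | F. F \<subseteq> GC q m C \<and> intersecting (Vset q m) F}"
    by simp
next
  fix n assume "n \<in> {card F | F. F \<subseteq> GC q m C \<and> intersecting (Vset q m) F}"
  then show "n \<le> card C"
    using card_intersecting_le by auto
next
  let ?T = "(\<lambda>c. code_perm q m (nth c) 0) ` C"
  have "?T \<subseteq> GC q m C"
    using code_perm_in_code_perms by (auto simp: GC_eq_code_perms)
  moreover have "card ?T = card C"
    by (rule card_image[OF inj_on_translations])
  ultimately show "card C \<in> {card F | F. F \<subseteq> GC q m C \<and> intersecting (Vset q m) F}"
    using intersecting_translations[OF assms] by (intro CollectI exI[of _ ?T] conjI) simp_all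
qed

lemma Max_card_stabilizer:
  assumes "C \<noteq> {zero_word}"
  shows "Max {card (stabilizer (GC q m C) v) | v. v \<in> Vset q m} = card (code_fibre 0 0)"
proof -
  have stab: "card (stabilizer (GC q m C) v) = card (code_fibre 0 0)" if "v \<in> Vset q m" for v
  proof -
    obtain i j where "v = (i, j)" "i < q" "j < m"
      using \<open>v \<in> Vset q m\<close> by (cases v) simp
    moreover have "card (code_fibre j 0) = card (code_fibre 0 0)"
      using card_code_eq[OF assms \<open>j < m\<close>] card_code_eq[OF assms m_pos] q_pos
      by (metis mult_left_cancel not_gr0)
    ultimately show ?thesis
      by (simp add: card_stabilizer_GC)
  qed
  have "{card (stabilizer (GC q m C) v) | v. v \<in> Vset q m}
      = (\<lambda>_. card (code_fibre 0 0)) ` Vset q m"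
    unfolding Setcompr_eq_image using stab by (rule image_cong[OF refl])
  also have "\<dots> = {card (code_fibre 0 0)}"
    using q_pos m_pos by (intro image_constant[of "(0, 0)"]) simp
  finally show ?thesis
    by simp
qed

end

theorem theorem1p1:
  fixes q m :: nat and C :: "nat list set"
  assumes "prime q" and "m > 0"
    and "cyclic_code q m C"
    and "C \<noteq> {replicate m 0}"
    and "\<forall>c\<in>C. hamming_weight c \<noteq> m"
  shows "transitive_on (Vset q m) (GC q m C) \<and> intersection_density (Vset q m) (GC q m C) = real q"
proof -
  interpret prime_cyclic_code q m C
    using assms(1-3) by unfold_locales
  have "intersection_density (Vset q m) (GC q m C) = real (card C) / real (card (code_fibre 0 0))"
    unfolding intersection_density_def Max_card_intersecting[OF assms(5)] Max_card_stabilizer[OF assms(4)] ..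
  also have "\<dots> = real q"
    using card_code_eq[OF assms(4,2)] card_code_fibre_pos by simp
  finally show ?thesis
    using GC_transitive[OF assms(4)] by simp
qed

end
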